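(* Let $p$ be an odd prime and $m>1$. Let $H$ be a subgroup of $\mathrm{GL}_m(p)$ of order coprime to $p$ which acts transitively on the nonzero vectors of $\mathbb{F}_p^m$, with $|H|\ge p^m-1$ and $|Z(H)|\ge\frac{p^m-1}{p}$. Then $H\cong\mathrm{GL}_1(p^m)$ is cyclic of order $p^m-1$. *)

theory Defs
  imports Complex_Main "HOL-Computational_Algebra.Primes" "HOL-Algebra.Elementary_Groups"
begin

text \<open>Vectors of F_p^m: functions nat => int with entries in {0..p-1} on
  indices below m (residues mod p) and zero elsewhere.\<close>
definition fvecs :: "nat \<Rightarrow> nat \<Rightarrow> (nat \<Rightarrow> int) set" where
  "fvecs m p = {v. (\<forall>i<m. 0 \<le> v i \<and> v i < int p) \<and> (\<forall>i\<ge>m. v i = 0)}"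

definition fmats :: "nat \<Rightarrow> nat \<Rightarrow> (nat \<Rightarrow> nat \<Rightarrow> int) set" where
  "fmats m p = {A. (\<forall>i<m. \<forall>j<m. 0 \<le> A i j \<and> A i j < int p)
                  \<and> (\<forall>i j. (i \<ge> m \<or> j \<ge> m) \<longrightarrow> A i j = 0)}"

definition fmat_mult :: "nat \<Rightarrow> nat \<Rightarrow> (nat \<Rightarrow> nat \<Rightarrow> int) \<Rightarrow> (nat \<Rightarrow> nat \<Rightarrow> int) \<Rightarrow> (nat \<Rightarrow> nat \<Rightarrow> int)" where
  "fmat_mult m p A B = (\<lambda>i j. if i < m \<and> j < m then (\<Sum>k<m. A i k * B k j) mod int p else 0)"

definition fmat_one :: "nat \<Rightarrow> nat \<Rightarrow> nat \<Rightarrow> int" where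
  "fmat_one m = (\<lambda>i j. if i < m \<and> j < m \<and> i = j then 1 else 0)"

definition fmat_vec :: "nat \<Rightarrow> nat \<Rightarrow> (nat \<Rightarrow> nat \<Rightarrow> int) \<Rightarrow> (nat \<Rightarrow> int) \<Rightarrow> (nat \<Rightarrow> int)" where
  "fmat_vec m p A v = (\<lambda>i. if i < m then (\<Sum>k<m. A i k * v k) mod int p else 0)"

definition GL :: "nat \<Rightarrow> nat \<Rightarrow> (nat \<Rightarrow> nat \<Rightarrow> int) monoid" where
  "GL m p = \<lparr> carrier = {A \<in> fmats m p. \<exists>B \<in> fmats m p.
                 fmat_mult m p A B = fmat_one m \<and> fmat_mult m p B A = fmat_one m},
             mult = fmat_mult m p, one = fmat_one m \<rparr>"

definition group_center :: "('a, 'b) monoid_scheme \<Rightarrow> 'a set" where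
  "group_center G = {z \<in> carrier G. \<forall>g \<in> carrier G. z \<otimes>\<^bsub>G\<^esub> g = g \<otimes>\<^bsub>G\<^esub> z}"

end

(*
  Let Z be the centre of H and K the additive closure of Z in the matrix ring, i.e. the
  F_p-algebra spanned by Z. Every element of K commutes with H; since H is transitive on the
  nonzero vectors, a nonzero element of K kills no nonzero vector (Schur). Hence K is a finite
  domain, thus a field, and for the first unit vector e the map a \<mapsto> a e is injective on K.
  If some v lay outside K e, then (a, b) \<mapsto> a e + b v would be injective on K \<times> K, so
  |K|^2 \<le> p^m, contradicting |K| > |Z| \<ge> (p^m - 1)/p. So K e = F_p^m, and as H centralises
  K, every h \<in> H equals the a \<in> K with a e = h e. Therefore H \<subseteq> K - {0}, and
  |H| \<ge> p^m - 1 forces H = K - {0}, the multiplicative group of a finite field, which is cyclic.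
*)
theory Submission
  imports Defs "HOL-Algebra.Multiplicative_Group"
begin

section \<open>Matrices and vectors over F_p\<close>

definition fmat_add :: "nat \<Rightarrow> nat \<Rightarrow> (nat \<Rightarrow> nat \<Rightarrow> int) \<Rightarrow> (nat \<Rightarrow> nat \<Rightarrow> int) \<Rightarrow> (nat \<Rightarrow> nat \<Rightarrow> int)" where
  "fmat_add m p A B = (\<lambda>i j. if i < m \<and> j < m then (A i j + B i j) mod int p else 0)"

definition fmat_neg :: "nat \<Rightarrow> nat \<Rightarrow> (nat \<Rightarrow> nat \<Rightarrow> int) \<Rightarrow> (nat \<Rightarrow> nat \<Rightarrow> int)" where
  "fmat_neg m p A = (\<lambda>i j. if i < m \<and> j < m then (- A i j) mod int p else 0)"

definition fmat_smult :: "nat \<Rightarrow> nat \<Rightarrow> nat \<Rightarrow> (nat \<Rightarrow> nat \<Rightarrow> int) \<Rightarrow> (nat \<Rightarrow> nat \<Rightarrow> int)" where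
  "fmat_smult m p k A = (\<lambda>i j. if i < m \<and> j < m then (int k * A i j) mod int p else 0)"

definition fvec_add :: "nat \<Rightarrow> nat \<Rightarrow> (nat \<Rightarrow> int) \<Rightarrow> (nat \<Rightarrow> int) \<Rightarrow> (nat \<Rightarrow> int)" where
  "fvec_add m p u w = (\<lambda>i. if i < m then (u i + w i) mod int p else 0)"

definition unit_fvec :: "nat \<Rightarrow> nat \<Rightarrow> int" where
  "unit_fvec j = (\<lambda>i. if i = j then 1 else 0)"

lemma sum_mult_mod_right:
  "(\<Sum>k\<in>K. f k * (g k mod (q::int))) mod q = (\<Sum>k\<in>K. f k * g k) mod q"
proof -
  have "(\<Sum>k\<in>K. f k * (g k mod q)) mod q = (\<Sum>k\<in>K. (f k * (g k mod q)) mod q) mod q"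
    by (simp add: mod_sum_eq)
  also have "\<dots> = (\<Sum>k\<in>K. (f k * g k) mod q) mod q"
    by (simp add: mod_mult_right_eq)
  also have "\<dots> = (\<Sum>k\<in>K. f k * g k) mod q"
    by (simp add: mod_sum_eq)
  finally show ?thesis .
qed

lemma sum_mult_mod_left:
  "(\<Sum>k\<in>K. (g k mod (q::int)) * f k) mod q = (\<Sum>k\<in>K. g k * f k) mod q"
  using sum_mult_mod_right[of f g q K] by (simp add: mult.commute)

lemma fmat_vec_mult:
  "fmat_vec m p (fmat_mult m p A B) v = fmat_vec m p A (fmat_vec m p B v)"
proof
  fix i
  show "fmat_vec m p (fmat_mult m p A B) v i = fmat_vec m p A (fmat_vec m p B v) i"
  proof (cases "i < m")
    case True
    have "fmat_vec m p (fmat_mult m p A B) v i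
        = (\<Sum>l<m. ((\<Sum>k<m. A i k * B k l) mod int p) * v l) mod int p"
      using True by (simp add: fmat_vec_def fmat_mult_def)
    also have "\<dots> = (\<Sum>l<m. \<Sum>k<m. A i k * B k l * v l) mod int p"
      by (simp add: sum_mult_mod_left sum_distrib_right)
    also have "\<dots> = (\<Sum>k<m. A i k * (\<Sum>l<m. B k l * v l)) mod int p"
      by (subst sum.swap) (simp add: sum_distrib_left mult.assoc)
    also have "\<dots> = (\<Sum>k<m. A i k * ((\<Sum>l<m. B k l * v l) mod int p)) mod int p"
      by (rule sum_mult_mod_right[symmetric])
    also have "\<dots> = fmat_vec m p A (fmat_vec m p B v) i"
      using True by (simp add: fmat_vec_def)
    finally show ?thesis .
  qed (simp add: fmat_vec_def)
qed

lemma fmat_vec_add_mat: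
  "fmat_vec m p (fmat_add m p A B) v = fvec_add m p (fmat_vec m p A v) (fmat_vec m p B v)"
proof
  fix i
  show "fmat_vec m p (fmat_add m p A B) v i = fvec_add m p (fmat_vec m p A v) (fmat_vec m p B v) i"
  proof (cases "i < m")
    case True
    have "fmat_vec m p (fmat_add m p A B) v i = (\<Sum>k<m. ((A i k + B i k) mod int p) * v k) mod int p"
      using True by (simp add: fmat_vec_def fmat_add_def)
    also have "\<dots> = ((\<Sum>k<m. A i k * v k) + (\<Sum>k<m. B i k * v k)) mod int p"
      by (simp add: sum_mult_mod_left sum.distrib distrib_right)
    also have "\<dots> = fvec_add m p (fmat_vec m p A v) (fmat_vec m p B v) i"
      using True by (simp add: fmat_vec_def fvec_add_def mod_add_eq)
    finally show ?thesis .
  qed (simp add: fmat_vec_def fvec_add_def)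
qed

lemma fmat_vec_add_vec:
  "fmat_vec m p A (fvec_add m p u w) = fvec_add m p (fmat_vec m p A u) (fmat_vec m p A w)"
proof
  fix i
  show "fmat_vec m p A (fvec_add m p u w) i = fvec_add m p (fmat_vec m p A u) (fmat_vec m p A w) i"
  proof (cases "i < m")
    case True
    have "fmat_vec m p A (fvec_add m p u w) i = (\<Sum>k<m. A i k * ((u k + w k) mod int p)) mod int p"
      using True by (simp add: fmat_vec_def fvec_add_def)
    also have "\<dots> = ((\<Sum>k<m. A i k * u k) + (\<Sum>k<m. A i k * w k)) mod int p"
      by (simp add: sum_mult_mod_right sum.distrib distrib_left)
    also have "\<dots> = fvec_add m p (fmat_vec m p A u) (fmat_vec m p A w) i"
      using True by (simp add: fmat_vec_def fvec_add_def mod_add_eq)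
    finally show ?thesis .
  qed (simp add: fmat_vec_def fvec_add_def)
qed

lemma fmat_vec_zero_mat [simp]: "fmat_vec m p (\<lambda>_ _. 0) v = (\<lambda>_. 0)"
  by (auto simp: fmat_vec_def)

lemma fmat_vec_zero_vec [simp]: "fmat_vec m p A (\<lambda>_. 0) = (\<lambda>_. 0)"
  by (auto simp: fmat_vec_def)

lemma fmat_vec_one:
  assumes "v \<in> fvecs m p"
  shows "fmat_vec m p (fmat_one m) v = v"
proof
  fix i
  show "fmat_vec m p (fmat_one m) v i = v i"
  proof (cases "i < m")
    case True
    have "(\<Sum>k<m. fmat_one m i k * v k) = (\<Sum>k\<in>{i}. v k)"
      by (rule sum.mono_neutral_cong_right) (use True in \<open>auto simp: fmat_one_def\<close>)
    then show ?thesis using True assms by (simp add: fmat_vec_def fvecs_def)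
  qed (use assms in \<open>simp add: fmat_vec_def fvecs_def\<close>)
qed

lemma fmat_vec_in_fvecs: assumes "p > 0" shows "fmat_vec m p A v \<in> fvecs m p"
  using assms by (auto simp: fmat_vec_def fvecs_def)

lemma fvec_add_in_fvecs: assumes "p > 0" shows "fvec_add m p u v \<in> fvecs m p"
  using assms by (auto simp: fvec_add_def fvecs_def)

lemma unit_fvec_in_fvecs: assumes "p > 1" "j < m" shows "unit_fvec j \<in> fvecs m p"
  using assms by (auto simp: unit_fvec_def fvecs_def)

lemma unit_fvec_nonzero: "unit_fvec j \<noteq> (\<lambda>_. 0)"
  by (metis one_neq_zero unit_fvec_def)

lemma fmat_add_in_fmats: assumes "p > 0" shows "fmat_add m p A B \<in> fmats m p"
  using assms by (auto simp: fmat_add_def fmats_def)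

lemma fmat_mult_in_fmats: assumes "p > 0" shows "fmat_mult m p A B \<in> fmats m p"
  using assms by (auto simp: fmat_mult_def fmats_def)

lemma zero_in_fmats: assumes "p > 0" shows "(\<lambda>_ _. 0) \<in> fmats m p"
  using assms by (auto simp: fmats_def)

lemma fmat_one_in_fmats: assumes "p > 1" shows "fmat_one m \<in> fmats m p"
  using assms by (auto simp: fmats_def fmat_one_def)

lemma fmat_vec_unit_fvec:
  assumes "A \<in> fmats m p" "i < m" "j < m"
  shows "fmat_vec m p A (unit_fvec j) i = A i j"
proof -
  have "(\<Sum>k<m. A i k * unit_fvec j k) = (\<Sum>k\<in>{j}. A i k)"
    by (rule sum.mono_neutral_cong_right) (use assms in \<open>auto simp: unit_fvec_def\<close>)
  then show ?thesis using assms by (simp add: fmat_vec_def fmats_def)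
qed

lemma fmat_eqI:
  assumes "p > 1" "A \<in> fmats m p" "B \<in> fmats m p"
    and "\<And>v. v \<in> fvecs m p \<Longrightarrow> fmat_vec m p A v = fmat_vec m p B v"
  shows "A = B"
proof (intro ext)
  fix i j
  show "A i j = B i j"
  proof (cases "i < m \<and> j < m")
    case True
    then have "fmat_vec m p A (unit_fvec j) i = fmat_vec m p B (unit_fvec j) i"
      using assms(4) unit_fvec_in_fvecs[OF assms(1)] by metis
    then show ?thesis using fmat_vec_unit_fvec assms(2,3) True by metis
  next
    case False
    then show ?thesis using assms(2,3) unfolding fmats_def by auto
  qed
qed

lemma fmat_eq_zero_iff:
  assumes "p > 1" "A \<in> fmats m p"
  shows "A = (\<lambda>_ _. 0) \<longleftrightarrow> (\<forall>v\<in>fvecs m p. fmat_vec m p A v = (\<lambda>_. 0))"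
  using fmat_eqI[OF assms zero_in_fmats] assms(1) by auto

lemma fvec_add_assoc: "fvec_add m p (fvec_add m p u v) w = fvec_add m p u (fvec_add m p v w)"
  by (intro ext) (auto simp: fvec_add_def add.assoc mod_add_left_eq mod_add_right_eq)

lemma fvec_add_commute: "fvec_add m p u v = fvec_add m p v u"
  by (intro ext) (auto simp: fvec_add_def add.commute)

lemma fvec_add_zero: "u \<in> fvecs m p \<Longrightarrow> fvec_add m p u (\<lambda>_. 0) = u"
  by (intro ext) (auto simp: fvec_add_def fvecs_def)

lemma fvec_add_swap:
  "fvec_add m p (fvec_add m p x y) (fvec_add m p u w) = fvec_add m p (fvec_add m p x u) (fvec_add m p y w)"
proof -
  have "fvec_add m p (fvec_add m p x y) (fvec_add m p u w) = fvec_add m p x (fvec_add m p (fvec_add m p y u) w)"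
    by (simp only: fvec_add_assoc)
  also have "\<dots> = fvec_add m p (fvec_add m p x u) (fvec_add m p y w)"
    by (simp only: fvec_add_commute[of m p y u] fvec_add_assoc)
  finally show ?thesis .
qed

lemma fmat_add_assoc: "fmat_add m p (fmat_add m p A B) C = fmat_add m p A (fmat_add m p B C)"
  by (intro ext) (auto simp: fmat_add_def add.assoc mod_add_left_eq mod_add_right_eq)

lemma fmat_add_commute: "fmat_add m p A B = fmat_add m p B A"
  by (intro ext) (auto simp: fmat_add_def add.commute)

lemma fmat_add_zero_right: "A \<in> fmats m p \<Longrightarrow> fmat_add m p A (\<lambda>_ _. 0) = A"
  by (intro ext) (auto simp: fmat_add_def fmats_def)

lemma fmat_add_zero_left: "A \<in> fmats m p \<Longrightarrow> fmat_add m p (\<lambda>_ _. 0) A = A"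
  by (intro ext) (auto simp: fmat_add_def fmats_def)

lemma fmat_add_neg_left: "fmat_add m p (fmat_neg m p A) A = (\<lambda>_ _. 0)"
  by (intro ext) (auto simp: fmat_add_def fmat_neg_def mod_add_left_eq)

lemma fmat_add_neg_right: "fmat_add m p A (fmat_neg m p A) = (\<lambda>_ _. 0)"
  by (metis fmat_add_commute fmat_add_neg_left)

lemma fmat_smult_0: "fmat_smult m p 0 A = (\<lambda>_ _. 0)"
  by (intro ext) (auto simp: fmat_smult_def)

lemma fmat_smult_Suc: "fmat_smult m p (Suc k) A = fmat_add m p (fmat_smult m p k A) A"
  by (intro ext) (auto simp: fmat_add_def fmat_smult_def mod_add_left_eq mod_add_right_eq algebra_simps)

lemma fmat_neg_eq_smult:
  assumes "p > 0"
  shows "fmat_neg m p A = fmat_smult m p (p - 1) A"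
proof -
  have "(- x) mod int p = (int (p - 1) * x) mod int p" for x
  proof -
    have "int (p - 1) * x = - x + int p * x"
      using assms by (simp add: of_nat_diff algebra_simps)
    then show ?thesis by (simp only: mod_mult_self2)
  qed
  then show ?thesis by (intro ext) (auto simp: fmat_neg_def fmat_smult_def)
qed

lemma fmat_eq_if_sub_eq_zero:
  assumes "A \<in> fmats m p" "B \<in> fmats m p" "fmat_add m p A (fmat_neg m p B) = (\<lambda>_ _. 0)"
  shows "A = B"
proof -
  have "A = fmat_add m p (fmat_add m p A (fmat_neg m p B)) B"
    using assms(1) by (simp add: fmat_add_assoc fmat_add_neg_left fmat_add_zero_right)
  then show ?thesis using assms by (simp add: fmat_add_zero_left)
qed

lemma fmat_vec_sub_eq_zero:
  assumes "fmat_vec m p A v = fmat_vec m p B v"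
  shows "fmat_vec m p (fmat_add m p A (fmat_neg m p B)) v = (\<lambda>_. 0)"
proof -
  have "fmat_vec m p (fmat_add m p A (fmat_neg m p B)) v
      = fvec_add m p (fmat_vec m p B v) (fmat_vec m p (fmat_neg m p B) v)"
    by (simp add: fmat_vec_add_mat assms)
  also have "\<dots> = fmat_vec m p (fmat_add m p (fmat_neg m p B) B) v"
    by (simp add: fmat_vec_add_mat fvec_add_commute)
  finally show ?thesis by (simp add: fmat_add_neg_left)
qed

lemma fmat_mult_assoc:
  "p > 1 \<Longrightarrow> fmat_mult m p (fmat_mult m p A B) C = fmat_mult m p A (fmat_mult m p B C)"
  by (intro fmat_eqI[where m=m]) (auto simp: fmat_vec_mult intro!: fmat_mult_in_fmats)

lemma fmat_mult_one_left: "p > 1 \<Longrightarrow> A \<in> fmats m p \<Longrightarrow> fmat_mult m p (fmat_one m) A = A"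
  by (intro fmat_eqI[where m=m])
    (auto simp: fmat_vec_mult fmat_vec_one fmat_vec_in_fvecs intro!: fmat_mult_in_fmats)

lemma fmat_mult_one_right: "p > 1 \<Longrightarrow> A \<in> fmats m p \<Longrightarrow> fmat_mult m p A (fmat_one m) = A"
  by (intro fmat_eqI[where m=m])
    (auto simp: fmat_vec_mult fmat_vec_one fmat_vec_in_fvecs intro!: fmat_mult_in_fmats)

lemma fmat_mult_add_right:
  "p > 1 \<Longrightarrow> fmat_mult m p A (fmat_add m p B C) = fmat_add m p (fmat_mult m p A B) (fmat_mult m p A C)"
  by (intro fmat_eqI[where m=m])
    (auto simp: fmat_vec_mult fmat_vec_add_mat fmat_vec_add_vec intro!: fmat_mult_in_fmats fmat_add_in_fmats)

lemma fmat_mult_add_left: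
  "p > 1 \<Longrightarrow> fmat_mult m p (fmat_add m p B C) A = fmat_add m p (fmat_mult m p B A) (fmat_mult m p C A)"
  by (intro fmat_eqI[where m=m])
    (auto simp: fmat_vec_mult fmat_vec_add_mat intro!: fmat_mult_in_fmats fmat_add_in_fmats)

lemma fmat_mult_zero_left [simp]: "fmat_mult m p (\<lambda>_ _. 0) A = (\<lambda>_ _. 0)"
  by (intro ext) (simp add: fmat_mult_def)

lemma fmat_mult_zero_right [simp]: "fmat_mult m p A (\<lambda>_ _. 0) = (\<lambda>_ _. 0)"
  by (intro ext) (simp add: fmat_mult_def)

lemma fmat_vec_eq_neg_if_add_eq_zero:
  assumes "p > 0" "w \<in> fvecs m p" "fvec_add m p (fmat_vec m p A u) w = (\<lambda>_. 0)"
  shows "w = fmat_vec m p (fmat_neg m p A) u"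
proof -
  have "w = fvec_add m p (fmat_vec m p (fmat_add m p (fmat_neg m p A) A) u) w"
    using assms(2) by (simp add: fmat_add_neg_left fvec_add_commute fvec_add_zero)
  also have "\<dots> = fvec_add m p (fmat_vec m p (fmat_neg m p A) u) (fvec_add m p (fmat_vec m p A u) w)"
    by (simp add: fmat_vec_add_mat fvec_add_assoc)
  also have "\<dots> = fmat_vec m p (fmat_neg m p A) u"
    by (simp add: assms(3) fvec_add_zero fmat_vec_in_fvecs[OF assms(1)])
  finally show ?thesis .
qed

lemma fvec_add_fmat_vec_sub_eq_zero:
  assumes "fvec_add m p (fmat_vec m p A u) (fmat_vec m p B w) = fvec_add m p (fmat_vec m p A' u) (fmat_vec m p B' w)"
  shows "fvec_add m p (fmat_vec m p (fmat_add m p A (fmat_neg m p A')) u)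
           (fmat_vec m p (fmat_add m p B (fmat_neg m p B')) w) = (\<lambda>_. 0)"
    (is "?lhs = _")
proof -
  let ?negs = "fvec_add m p (fmat_vec m p (fmat_neg m p A') u) (fmat_vec m p (fmat_neg m p B') w)"
  have "?lhs = fvec_add m p (fvec_add m p (fmat_vec m p A u) (fmat_vec m p B w)) ?negs"
    by (simp add: fmat_vec_add_mat fvec_add_swap)
  also have "\<dots> = fvec_add m p (fvec_add m p (fmat_vec m p A' u) (fmat_vec m p B' w)) ?negs"
    by (simp only: assms)
  also have "\<dots> = fvec_add m p (fmat_vec m p (fmat_add m p A' (fmat_neg m p A')) u)
      (fmat_vec m p (fmat_add m p B' (fmat_neg m p B')) w)"
    by (simp add: fmat_vec_add_mat fvec_add_swap)
  also have "\<dots> = (\<lambda>_. 0)"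
    by (intro ext) (simp add: fmat_add_neg_right fvec_add_def)
  finally show ?thesis .
qed

lemma fvecs_Suc: "fvecs (Suc m) p = (\<lambda>(v, x). v(m := x)) ` (fvecs m p \<times> {0..<int p})"
proof (intro equalityI subsetI)
  fix w
  assume w: "w \<in> fvecs (Suc m) p"
  have "w = (\<lambda>(v, x). v(m := x)) (w(m := 0), w m)" by simp
  moreover have "(w(m := 0), w m) \<in> fvecs m p \<times> {0..<int p}"
    using w by (auto simp: fvecs_def)
  ultimately show "w \<in> (\<lambda>(v, x). v(m := x)) ` (fvecs m p \<times> {0..<int p})" by blast
qed (auto simp: fvecs_def less_Suc_eq)

lemma finite_fvecs_card: "finite (fvecs m p) \<and> card (fvecs m p) = p ^ m"
proof (induction m)
  case 0
  have "fvecs 0 p = {(\<lambda>_. 0)}" by (auto simp: fvecs_def)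
  then show ?case by simp
next
  case (Suc m)
  have "inj_on (\<lambda>(v, x). v(m := x)) (fvecs m p \<times> {0..<int p})"
  proof (rule inj_onI, clarify)
    fix v x v' x'
    assume vs: "v \<in> fvecs m p" "v' \<in> fvecs m p" and eq: "v(m := x) = v'(m := x')"
    have "v i = v' i" for i
      using fun_cong[OF eq, of i] vs by (cases "i = m") (auto simp: fvecs_def)
    then show "v = v' \<and> x = x'" using fun_cong[OF eq, of m] by auto
  qed
  then show ?case using Suc unfolding fvecs_Suc
    by (simp add: card_image card_cartesian_product)
qed

lemma finite_fvecs: "finite (fvecs m p)" and card_fvecs: "card (fvecs m p) = p ^ m"
  using finite_fvecs_card by auto

section \<open>The group GL_m(p)\<close>

lemma group_GL:
  assumes "p > 1"
  shows "group (GL m p)"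
proof (rule groupI)
  fix x y
  assume "x \<in> carrier (GL m p)" "y \<in> carrier (GL m p)"
  then obtain x' y' where x': "x' \<in> fmats m p" "fmat_mult m p x x' = fmat_one m" "fmat_mult m p x' x = fmat_one m"
    and y': "y' \<in> fmats m p" "fmat_mult m p y y' = fmat_one m" "fmat_mult m p y' y = fmat_one m"
    and xy: "x \<in> fmats m p" "y \<in> fmats m p"
    by (auto simp: GL_def)
  have "fmat_mult m p (fmat_mult m p x y) (fmat_mult m p y' x')
      = fmat_mult m p x (fmat_mult m p (fmat_mult m p y y') x')"
    by (simp add: fmat_mult_assoc[OF assms])
  then have "fmat_mult m p (fmat_mult m p x y) (fmat_mult m p y' x') = fmat_one m"
    using x' y' by (simp add: fmat_mult_one_left[OF assms])
  moreover have "fmat_mult m p (fmat_mult m p y' x') (fmat_mult m p x y)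
      = fmat_mult m p y' (fmat_mult m p (fmat_mult m p x' x) y)"
    by (simp add: fmat_mult_assoc[OF assms])
  then have "fmat_mult m p (fmat_mult m p y' x') (fmat_mult m p x y) = fmat_one m"
    using x' y' xy by (simp add: fmat_mult_one_left[OF assms])
  ultimately show "x \<otimes>\<^bsub>GL m p\<^esub> y \<in> carrier (GL m p)"
    using assms x' y' by (auto simp: GL_def intro!: fmat_mult_in_fmats)
next
  show "\<one>\<^bsub>GL m p\<^esub> \<in> carrier (GL m p)"
    using assms by (auto simp: GL_def fmat_one_in_fmats fmat_mult_one_left)
next
  fix x y z
  assume "x \<in> carrier (GL m p)" "y \<in> carrier (GL m p)" "z \<in> carrier (GL m p)"
  then show "x \<otimes>\<^bsub>GL m p\<^esub> y \<otimes>\<^bsub>GL m p\<^esub> z = x \<otimes>\<^bsub>GL m p\<^esub> (y \<otimes>\<^bsub>GL m p\<^esub> z)"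
    using assms by (simp add: GL_def fmat_mult_assoc)
next
  fix x
  assume "x \<in> carrier (GL m p)"
  then show "\<one>\<^bsub>GL m p\<^esub> \<otimes>\<^bsub>GL m p\<^esub> x = x"
    using assms by (simp add: GL_def fmat_mult_one_left)
next
  fix x
  assume "x \<in> carrier (GL m p)"
  then obtain x' where "x' \<in> fmats m p" "fmat_mult m p x' x = fmat_one m" "x \<in> fmats m p"
    "fmat_mult m p x x' = fmat_one m"
    by (auto simp: GL_def)
  then show "\<exists>y\<in>carrier (GL m p). y \<otimes>\<^bsub>GL m p\<^esub> x = \<one>\<^bsub>GL m p\<^esub>"
    by (auto simp: GL_def)
qed

lemma fmat_zero_notin_GL:
  assumes "m > 0"
  shows "(\<lambda>_ _. 0) \<notin> carrier (GL m p)"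
proof
  assume "(\<lambda>_ _. 0) \<in> carrier (GL m p)"
  then have "(\<lambda>_ _. 0) = fmat_one m" by (auto simp: GL_def)
  then have "fmat_one m 0 0 = 0" by (metis fun_cong)
  then show False using assms by (simp add: fmat_one_def)
qed

section \<open>Fields of matrices\<close>

inductive_set fmat_add_closure :: "nat \<Rightarrow> nat \<Rightarrow> (nat \<Rightarrow> nat \<Rightarrow> int) set \<Rightarrow> (nat \<Rightarrow> nat \<Rightarrow> int) set"
  for m p S where
  zero: "(\<lambda>_ _. 0) \<in> fmat_add_closure m p S"
| add: "a \<in> fmat_add_closure m p S \<Longrightarrow> s \<in> S \<Longrightarrow> fmat_add m p a s \<in> fmat_add_closure m p S"

lemma fmat_add_closure_in_fmats:
  assumes "p > 0" "a \<in> fmat_add_closure m p S"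
  shows "a \<in> fmats m p"
  using assms(2) by induction (auto simp: assms(1) zero_in_fmats fmat_add_in_fmats)

lemma subset_fmat_add_closure:
  assumes "S \<subseteq> fmats m p"
  shows "S \<subseteq> fmat_add_closure m p S"
proof
  fix s
  assume "s \<in> S"
  then have "fmat_add m p (\<lambda>_ _. 0) s \<in> fmat_add_closure m p S"
    by (blast intro: fmat_add_closure.intros)
  then show "s \<in> fmat_add_closure m p S"
    using \<open>s \<in> S\<close> assms by (auto simp: fmat_add_zero_left)
qed

lemma fmat_add_closure_add:
  assumes "p > 0" "a \<in> fmat_add_closure m p S" "b \<in> fmat_add_closure m p S"
  shows "fmat_add m p a b \<in> fmat_add_closure m p S"
  using assms(3)
proof induction
  case zero
  show ?case using assms(1,2) by (simp add: fmat_add_closure_in_fmats fmat_add_zero_right)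
next
  case (add b s)
  then show ?case by (metis fmat_add_closure.add fmat_add_assoc)
qed

lemma fmat_add_closure_neg:
  assumes "p > 0" "a \<in> fmat_add_closure m p S"
  shows "fmat_neg m p a \<in> fmat_add_closure m p S"
proof -
  have "fmat_smult m p k a \<in> fmat_add_closure m p S" for k
    by (induction k) (auto simp: fmat_smult_0 fmat_smult_Suc assms fmat_add_closure_add
        intro: fmat_add_closure.zero)
  then show ?thesis by (simp add: fmat_neg_eq_smult[OF assms(1)])
qed

lemma fmat_add_closure_commute:
  assumes "p > 1" "a \<in> fmat_add_closure m p S" "\<And>s. s \<in> S \<Longrightarrow> fmat_mult m p s g = fmat_mult m p g s"
  shows "fmat_mult m p a g = fmat_mult m p g a"
  using assms(2)
  by induction (simp_all add: assms(3) fmat_mult_add_left[OF assms(1)] fmat_mult_add_right[OF assms(1)])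

lemma fmat_add_closure_mult:
  assumes "p > 1" and S_mult: "\<And>s t. s \<in> S \<Longrightarrow> t \<in> S \<Longrightarrow> fmat_mult m p s t \<in> S"
    and S_fmats: "S \<subseteq> fmats m p"
    and "a \<in> fmat_add_closure m p S" "b \<in> fmat_add_closure m p S"
  shows "fmat_mult m p a b \<in> fmat_add_closure m p S"
proof -
  have p: "p > 0" using assms(1) by simp
  have S_closure: "s \<in> S \<Longrightarrow> s \<in> fmat_add_closure m p S" for s
    using subset_fmat_add_closure[OF S_fmats] by blast
  have mult_S: "fmat_mult m p a' t \<in> fmat_add_closure m p S" if "a' \<in> fmat_add_closure m p S" "t \<in> S" for a' t
    using that(1)
    by induction (auto simp: fmat_mult_add_left[OF assms(1)] that(2) S_mult S_closure
        fmat_add_closure_add[OF p] fmat_add_closure.zero)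
  show ?thesis
    using assms(5)
    by induction (auto simp: fmat_mult_add_right[OF assms(1)] assms(4) mult_S
        fmat_add_closure_add[OF p] fmat_add_closure.zero)
qed

definition fmat_ring :: "nat \<Rightarrow> nat \<Rightarrow> (nat \<Rightarrow> nat \<Rightarrow> int) set \<Rightarrow> (nat \<Rightarrow> nat \<Rightarrow> int) ring" where
  "fmat_ring m p R = \<lparr>carrier = R, mult = fmat_mult m p, one = fmat_one m,
                      zero = (\<lambda>_ _. 0), add = fmat_add m p\<rparr>"

lemma cring_fmat_ring_add_closure:
  assumes "p > 1" and S_fmats: "S \<subseteq> fmats m p" and "fmat_one m \<in> S"
    and S_mult: "\<And>s t. s \<in> S \<Longrightarrow> t \<in> S \<Longrightarrow> fmat_mult m p s t \<in> S"
    and S_commute: "\<And>s t. s \<in> S \<Longrightarrow> t \<in> S \<Longrightarrow> fmat_mult m p s t = fmat_mult m p t s"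
  shows "cring (fmat_ring m p (fmat_add_closure m p S))"
proof -
  let ?A = "fmat_add_closure m p S"
  have p: "p > 0" using assms(1) by simp
  have in_fmats: "a \<in> ?A \<Longrightarrow> a \<in> fmats m p" for a
    using fmat_add_closure_in_fmats[OF p] .
  have commute: "fmat_mult m p a b = fmat_mult m p b a" if "a \<in> ?A" "b \<in> ?A" for a b
  proof -
    have "fmat_mult m p s b = fmat_mult m p b s" if "s \<in> S" for s
      using fmat_add_closure_commute[OF assms(1) \<open>b \<in> ?A\<close>] S_commute[OF that] by metis
    then show ?thesis using fmat_add_closure_commute[OF assms(1) \<open>a \<in> ?A\<close>] by blast
  qed
  show ?thesis
  proof (rule cringI)
    show "abelian_group (fmat_ring m p ?A)"
      by (rule abelian_groupI)
        (auto simp: fmat_ring_def fmat_add_closure_add[OF p] fmat_add_closure.zero fmat_add_assoc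
          in_fmats fmat_add_zero_left intro: fmat_add_commute
          intro!: bexI[of _ "fmat_neg m p _"] fmat_add_closure_neg[OF p] fmat_add_neg_left)
    show "comm_monoid (fmat_ring m p ?A)"
      using subset_fmat_add_closure[OF S_fmats] \<open>fmat_one m \<in> S\<close>
      by (intro comm_monoidI)
        (auto simp: fmat_ring_def fmat_add_closure_mult[OF assms(1) S_mult S_fmats]
          fmat_mult_assoc[OF assms(1)] fmat_mult_one_left[OF assms(1)] in_fmats commute)
  qed (simp add: fmat_ring_def fmat_mult_add_left[OF assms(1)])
qed

lemma (in domain) field_if_finite_carrier:
  assumes "finite (carrier R)"
  shows "field R"
proof (rule cring_fieldI2)
  fix a
  assume a: "a \<in> carrier R" "a \<noteq> \<zero>"
  have "inj_on (\<lambda>x. a \<otimes> x) (carrier R)"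
    using m_lcancel[OF a(2) a(1)] by (auto intro: inj_onI)
  then have "(\<lambda>x. a \<otimes> x) ` carrier R = carrier R"
    using endo_inj_surj[OF assms] a(1) by blast
  then show "\<exists>b\<in>carrier R. a \<otimes> b = \<one>"
    by (metis imageE one_closed)
qed simp

lemma cyclic_group_if_units_of_fmat_field:
  assumes "p > 1" "subgroup H (GL m p)" "field (fmat_ring m p F)" "finite F"
    and H_units: "H = F - {(\<lambda>_ _. 0)}"
  shows "cyclic_group ((GL m p)\<lparr>carrier := H\<rparr>)"
proof -
  let ?R = "fmat_ring m p F" and ?G = "(GL m p)\<lparr>carrier := H\<rparr>"
  interpret R: field ?R by fact
  have group: "group ?G" by (rule subgroup.subgroup_is_group[OF assms(2) group_GL[OF assms(1)]])
  have units: "carrier (mult_of ?R) = H" using H_units by (simp add: fmat_ring_def)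
  obtain a where "a \<in> carrier (mult_of ?R)"
    and gen: "carrier (mult_of ?R) = {a [^]\<^bsub>?R\<^esub> i | i::nat. i \<in> UNIV}"
    using R.finite_field_mult_group_has_gen assms(4) by (auto simp: fmat_ring_def)
  then have a: "a \<in> H" using units by blast
  have pow: "a [^]\<^bsub>?R\<^esub> n = a [^]\<^bsub>?G\<^esub> (int n)" for n :: nat
  proof -
    have "a [^]\<^bsub>?R\<^esub> n = a [^]\<^bsub>?G\<^esub> n"
      by (induction n) (simp_all add: fmat_ring_def GL_def)
    then show ?thesis by (simp add: int_pow_int)
  qed
  have "H \<subseteq> range (\<lambda>n::int. a [^]\<^bsub>?G\<^esub> n)"
    using gen units pow by auto
  moreover have "range (\<lambda>n::int. a [^]\<^bsub>?G\<^esub> n) \<subseteq> H"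
    using group.int_pow_closed[OF group] a by auto
  ultimately show ?thesis using group.cyclic_group[OF group] a by auto
qed

section \<open>Transitive linear groups with a large centre\<close>

lemma power_less_square_if_le_mult_pred:
  fixes p q m :: nat
  assumes "m > 1" "p > 1" and bound: "real p ^ m - 1 \<le> real p * (real q - 1)"
  shows "p ^ m < q * q"
proof (rule ccontr)
  assume "\<not> p ^ m < q * q"
  then have q_sq: "real q * real q \<le> real p ^ m"
    by (metis not_less of_nat_le_iff of_nat_mult of_nat_power)
  have "p ^ 2 \<le> p ^ m" using assms(1,2) by (intro power_increasing) auto
  then have p_sq: "real p * real p \<le> real p ^ m"
    by (metis of_nat_le_iff of_nat_power power2_eq_square)
  have p2: "real p \<ge> 2" using assms(2) by simp
  then have "2 * 2 \<le> real p * real p" by (intro mult_mono) auto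
  have q2: "real q \<ge> 2"
  proof (rule ccontr)
    assume "\<not> real q \<ge> 2"
    then have "real q - 1 \<le> 0" by simp
    then have "real p * (real q - 1) \<le> 0" using p2 by (simp add: mult_nonneg_nonpos)
    then show False using bound p_sq \<open>2 * 2 \<le> real p * real p\<close> by linarith
  qed
  have "(real q + 1) * (real q - 1) \<le> real p * (real q - 1)"
    using bound q_sq by (simp add: algebra_simps)
  then have "real q + 1 \<le> real p" by (rule mult_right_le_imp_le) (use q2 in simp)
  then have "real q - 1 \<le> real p - 2" by simp
  then have "real p * (real q - 1) \<le> real p * (real p - 2)" by (rule mult_left_mono) (use p2 in simp)
  then show False using bound p_sq p2 by (simp add: algebra_simps)
qed

locale transitive_fmat_group =
  fixes p m :: nat and H :: "(nat \<Rightarrow> nat \<Rightarrow> int) set"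
  assumes p_gt_1: "p > 1" and m_pos: "m > 0" and subgroup_H: "subgroup H (GL m p)"
    and transitive: "\<forall>v \<in> fvecs m p - {(\<lambda>_. 0)}. \<forall>w \<in> fvecs m p - {(\<lambda>_. 0)}.
           \<exists>h \<in> H. fmat_vec m p h v = w"
begin

abbreviation Z where "Z \<equiv> group_center ((GL m p)\<lparr>carrier := H\<rparr>)"
abbreviation K where "K \<equiv> fmat_add_closure m p Z"

lemma p_pos: "p > 0"
  using p_gt_1 by simp

lemma H_subset_fmats: "H \<subseteq> fmats m p"
  using subgroup.subset[OF subgroup_H] by (auto simp: GL_def)

lemma zero_notin_H: "(\<lambda>_ _. 0) \<notin> H"
  using subgroup.subset[OF subgroup_H] fmat_zero_notin_GL[OF m_pos] by blast

lemma one_in_H: "fmat_one m \<in> H"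
  using subgroup.one_closed[OF subgroup_H] by (simp add: GL_def)

lemma H_mult_closed: "x \<in> H \<Longrightarrow> y \<in> H \<Longrightarrow> fmat_mult m p x y \<in> H"
  using subgroup.m_closed[OF subgroup_H] by (simp add: GL_def)

lemma center_eq: "Z = {z \<in> H. \<forall>g\<in>H. fmat_mult m p z g = fmat_mult m p g z}"
  by (simp add: group_center_def GL_def)

lemma center_subset_fmats: "Z \<subseteq> fmats m p"
  using H_subset_fmats center_eq by blast

lemma one_in_center: "fmat_one m \<in> Z"
  using one_in_H H_subset_fmats
  by (auto simp: center_eq fmat_mult_one_left[OF p_gt_1] fmat_mult_one_right[OF p_gt_1])

lemma center_subset_H: "Z \<subseteq> H"
  unfolding center_eq by blast

lemma center_commute: "z \<in> Z \<Longrightarrow> g \<in> H \<Longrightarrow> fmat_mult m p z g = fmat_mult m p g z"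
  unfolding center_eq by blast

lemma center_mult_closed:
  assumes "y \<in> Z" "z \<in> Z"
  shows "fmat_mult m p y z \<in> Z"
proof -
  have "fmat_mult m p (fmat_mult m p y z) g = fmat_mult m p g (fmat_mult m p y z)" if "g \<in> H" for g
  proof -
    have "fmat_mult m p (fmat_mult m p y z) g = fmat_mult m p y (fmat_mult m p g z)"
      using center_commute[OF assms(2) that] by (simp add: fmat_mult_assoc[OF p_gt_1])
    also have "\<dots> = fmat_mult m p (fmat_mult m p g y) z"
      using center_commute[OF assms(1) that] by (simp flip: fmat_mult_assoc[OF p_gt_1])
    finally show ?thesis by (simp add: fmat_mult_assoc[OF p_gt_1])
  qed
  moreover have "fmat_mult m p y z \<in> H"
    using assms center_subset_H H_mult_closed by blast
  ultimately show ?thesis unfolding center_eq by blast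
qed

lemma K_in_fmats: "a \<in> K \<Longrightarrow> a \<in> fmats m p"
  using fmat_add_closure_in_fmats[OF p_pos] .

lemma center_subset_K: "Z \<subseteq> K"
  using subset_fmat_add_closure[OF center_subset_fmats] .

lemma K_commute_H: "a \<in> K \<Longrightarrow> h \<in> H \<Longrightarrow> fmat_mult m p a h = fmat_mult m p h a"
  using fmat_add_closure_commute[OF p_gt_1] center_eq by blast

lemma cring_K: "cring (fmat_ring m p K)"
  using center_commute center_subset_H
  by (intro cring_fmat_ring_add_closure[OF p_gt_1 center_subset_fmats one_in_center center_mult_closed]) blast+

lemma K_sub: "a \<in> K \<Longrightarrow> b \<in> K \<Longrightarrow> fmat_add m p a (fmat_neg m p b) \<in> K"
  using fmat_add_closure_add[OF p_pos] fmat_add_closure_neg[OF p_pos] by blast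

lemma K_mult: "a \<in> K \<Longrightarrow> b \<in> K \<Longrightarrow> fmat_mult m p a b \<in> K"
  using fmat_add_closure_mult[OF p_gt_1 center_mult_closed center_subset_fmats] .

lemma K_commute:
  assumes "a \<in> K" "b \<in> K"
  shows "fmat_mult m p a b = fmat_mult m p b a"
proof -
  interpret cring "fmat_ring m p K" by (rule cring_K)
  show ?thesis using m_comm assms by (simp add: fmat_ring_def)
qed

text \<open>Schur's lemma: the kernel of an element of K is an H-invariant subspace, and H is
  transitive on nonzero vectors.\<close>
lemma K_eq_zero_if_kills:
  assumes "a \<in> K" "v \<in> fvecs m p" "v \<noteq> (\<lambda>_. 0)" "fmat_vec m p a v = (\<lambda>_. 0)"
  shows "a = (\<lambda>_ _. 0)"
proof (rule fmat_eqI[OF p_gt_1 K_in_fmats[OF assms(1)] zero_in_fmats[OF p_pos]])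
  fix w
  assume w: "w \<in> fvecs m p"
  show "fmat_vec m p a w = fmat_vec m p (\<lambda>_ _. 0) w"
  proof (cases "w = (\<lambda>_. 0)")
    case False
    then obtain h where h: "h \<in> H" "fmat_vec m p h v = w"
      using transitive assms(2,3) w by blast
    then have "fmat_vec m p a w = fmat_vec m p (fmat_mult m p a h) v"
      by (simp add: fmat_vec_mult)
    also have "\<dots> = fmat_vec m p (fmat_mult m p h a) v"
      using K_commute_H[OF assms(1) h(1)] by simp
    finally have "fmat_vec m p a w = fmat_vec m p (fmat_mult m p h a) v" .
    then show ?thesis using assms(4) by (simp add: fmat_vec_mult)
  qed simp
qed

lemma inj_on_K_apply:
  assumes "v \<in> fvecs m p" "v \<noteq> (\<lambda>_. 0)"
  shows "inj_on (\<lambda>a. fmat_vec m p a v) K"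
proof (rule inj_onI)
  fix a b
  assume "a \<in> K" "b \<in> K" "fmat_vec m p a v = fmat_vec m p b v"
  then have "fmat_add m p a (fmat_neg m p b) = (\<lambda>_ _. 0)"
    using K_eq_zero_if_kills K_sub assms fmat_vec_sub_eq_zero by blast
  then show "a = b" using fmat_eq_if_sub_eq_zero K_in_fmats \<open>a \<in> K\<close> \<open>b \<in> K\<close> by blast
qed

abbreviation e where "e \<equiv> unit_fvec 0"

lemma e_in_fvecs: "e \<in> fvecs m p"
  using unit_fvec_in_fvecs[OF p_gt_1 m_pos] .

lemma finite_K: "finite K"
  using inj_on_finite[OF inj_on_K_apply[OF e_in_fvecs unit_fvec_nonzero] _ finite_fvecs]
    fmat_vec_in_fvecs[OF p_pos] by blast

lemma card_K_le: "card K \<le> p ^ m"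
proof -
  have "(\<lambda>a. fmat_vec m p a e) ` K \<subseteq> fvecs m p"
    using fmat_vec_in_fvecs[OF p_pos] by blast
  then show ?thesis
    using card_inj_on_le[OF inj_on_K_apply[OF e_in_fvecs unit_fvec_nonzero] _ finite_fvecs]
    by (simp add: card_fvecs)
qed

lemma card_K_minus_zero: "card (K - {(\<lambda>_ _. 0)}) = card K - 1"
  using finite_K fmat_add_closure.zero by (simp add: card_Diff_singleton)

lemma card_center_less_card_K: "card Z < card K"
proof -
  have "Z \<subseteq> K - {(\<lambda>_ _. 0)}"
    using center_subset_K center_subset_H zero_notin_H by blast
  then have "card Z \<le> card K - 1"
    using finite_K card_mono[of "K - {(\<lambda>_ _. 0)}" Z] card_K_minus_zero by simp
  moreover have "card K > 0"
    using finite_K fmat_add_closure.zero card_gt_0_iff by blast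
  ultimately show ?thesis by linarith
qed

lemma domain_K: "domain (fmat_ring m p K)"
proof (rule domain.intro[OF cring_K], unfold_locales)
  show "\<one>\<^bsub>fmat_ring m p K\<^esub> \<noteq> \<zero>\<^bsub>fmat_ring m p K\<^esub>"
    using one_in_H zero_notin_H by (auto simp: fmat_ring_def)
next
  fix a b
  assume "a \<otimes>\<^bsub>fmat_ring m p K\<^esub> b = \<zero>\<^bsub>fmat_ring m p K\<^esub>"
    "a \<in> carrier (fmat_ring m p K)" "b \<in> carrier (fmat_ring m p K)"
  then have ab: "fmat_mult m p a b = (\<lambda>_ _. 0)" "a \<in> K" "b \<in> K"
    by (auto simp: fmat_ring_def)
  show "a = \<zero>\<^bsub>fmat_ring m p K\<^esub> \<or> b = \<zero>\<^bsub>fmat_ring m p K\<^esub>"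
  proof (cases "b = (\<lambda>_ _. 0)")
    case False
    then obtain v where "v \<in> fvecs m p" "fmat_vec m p b v \<noteq> (\<lambda>_. 0)"
      using fmat_eq_zero_iff[OF p_gt_1 K_in_fmats[OF ab(3)]] by blast
    moreover have "fmat_vec m p a (fmat_vec m p b v) = (\<lambda>_. 0)"
      using ab(1) by (simp flip: fmat_vec_mult)
    ultimately have "a = (\<lambda>_ _. 0)"
      using K_eq_zero_if_kills[OF ab(2) fmat_vec_in_fvecs[OF p_pos]] by blast
    then show ?thesis by (simp add: fmat_ring_def)
  qed (simp add: fmat_ring_def)
qed

lemma field_K: "field (fmat_ring m p K)"
  using domain.field_if_finite_carrier[OF domain_K] finite_K by (simp add: fmat_ring_def)

lemma K_inverse:
  assumes "a \<in> K" "a \<noteq> (\<lambda>_ _. 0)"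
  obtains b where "b \<in> K" "fmat_mult m p b a = fmat_one m"
proof -
  interpret F: field "fmat_ring m p K" by (rule field_K)
  have "a \<in> Units (fmat_ring m p K)"
    using F.field_Units assms by (simp add: fmat_ring_def)
  then show ?thesis
    using F.Units_l_inv_ex that by (auto simp: fmat_ring_def)
qed

lemma K_apply_independent:
  assumes u: "u \<in> fvecs m p" "u \<noteq> (\<lambda>_. 0)"
    and v: "v \<in> fvecs m p" "v \<notin> (\<lambda>a. fmat_vec m p a u) ` K"
    and ab: "a \<in> K" "b \<in> K" "fvec_add m p (fmat_vec m p a u) (fmat_vec m p b v) = (\<lambda>_. 0)"
  shows "a = (\<lambda>_ _. 0) \<and> b = (\<lambda>_ _. 0)"
proof -
  have b: "b = (\<lambda>_ _. 0)"
  proof (rule ccontr)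
    assume "b \<noteq> (\<lambda>_ _. 0)"
    then obtain c where c: "c \<in> K" "fmat_mult m p c b = fmat_one m"
      using K_inverse ab(2) by blast
    have "fmat_vec m p b v = fmat_vec m p (fmat_neg m p a) u"
      by (rule fmat_vec_eq_neg_if_add_eq_zero[OF p_pos fmat_vec_in_fvecs[OF p_pos] ab(3)])
    then have "v = fmat_vec m p (fmat_mult m p c (fmat_neg m p a)) u"
      using fmat_vec_one[OF v(1)] c(2) by (metis fmat_vec_mult)
    moreover have "fmat_mult m p c (fmat_neg m p a) \<in> K"
      using K_mult[OF c(1)] fmat_add_closure_neg[OF p_pos ab(1)] by blast
    ultimately show False using v(2) by blast
  qed
  then have "fmat_vec m p a u = (\<lambda>_. 0)"
    using ab(3) by (simp add: fvec_add_zero fmat_vec_in_fvecs[OF p_pos])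
  then show ?thesis using K_eq_zero_if_kills[OF ab(1) u] b by blast
qed

lemma card_K_square_le:
  assumes "v \<in> fvecs m p" "v \<notin> (\<lambda>a. fmat_vec m p a e) ` K"
  shows "card K * card K \<le> p ^ m"
proof -
  let ?phi = "\<lambda>(a, b). fvec_add m p (fmat_vec m p a e) (fmat_vec m p b v)"
  have "inj_on ?phi (K \<times> K)"
  proof (rule inj_onI, clarify)
    fix a b a' b'
    assume K: "a \<in> K" "b \<in> K" "a' \<in> K" "b' \<in> K"
      and eq: "fvec_add m p (fmat_vec m p a e) (fmat_vec m p b v)
         = fvec_add m p (fmat_vec m p a' e) (fmat_vec m p b' v)"
    have "fvec_add m p (fmat_vec m p (fmat_add m p a (fmat_neg m p a')) e)
        (fmat_vec m p (fmat_add m p b (fmat_neg m p b')) v) = (\<lambda>_. 0)"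
      using eq by (rule fvec_add_fmat_vec_sub_eq_zero)
    then have "fmat_add m p a (fmat_neg m p a') = (\<lambda>_ _. 0) \<and> fmat_add m p b (fmat_neg m p b') = (\<lambda>_ _. 0)"
      using K_apply_independent[OF e_in_fvecs unit_fvec_nonzero assms K_sub[OF K(1,3)] K_sub[OF K(2,4)]]
      by blast
    then show "a = a' \<and> b = b'"
      using fmat_eq_if_sub_eq_zero K_in_fmats K by blast
  qed
  moreover have "?phi ` (K \<times> K) \<subseteq> fvecs m p"
    using fvec_add_in_fvecs[OF p_pos] by auto
  ultimately have "card (K \<times> K) \<le> card (fvecs m p)"
    using finite_fvecs by (rule card_inj_on_le)
  then show ?thesis by (simp add: card_cartesian_product card_fvecs)
qed

lemma K_apply_surj:
  assumes "m > 1" and center_bound: "real p ^ m - 1 \<le> real p * real (card Z)"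
  shows "(\<lambda>a. fmat_vec m p a e) ` K = fvecs m p"
proof (rule ccontr)
  assume "(\<lambda>a. fmat_vec m p a e) ` K \<noteq> fvecs m p"
  then obtain v where "v \<in> fvecs m p" "v \<notin> (\<lambda>a. fmat_vec m p a e) ` K"
    using fmat_vec_in_fvecs[OF p_pos] by blast
  then have "card K * card K \<le> p ^ m" by (rule card_K_square_le)
  moreover have "real (card Z) \<le> real (card K) - 1"
    using card_center_less_card_K by linarith
  then have "real p ^ m - 1 \<le> real p * (real (card K) - 1)"
    using center_bound by (smt (verit) mult_left_mono of_nat_0_le_iff)
  ultimately show False
    using power_less_square_if_le_mult_pred[OF assms(1) p_gt_1] by fastforce
qed

lemma H_subset_K:
  assumes "m > 1" "real p ^ m - 1 \<le> real p * real (card Z)"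
  shows "H \<subseteq> K"
proof
  fix h
  assume h: "h \<in> H"
  note surj = K_apply_surj[OF assms]
  have "fmat_vec m p h e \<in> (\<lambda>a. fmat_vec m p a e) ` K"
    using surj fmat_vec_in_fvecs[OF p_pos] by simp
  then obtain a where a: "a \<in> K" "fmat_vec m p a e = fmat_vec m p h e"
    by (auto simp: image_iff)
  have "h = a"
  proof (rule fmat_eqI[OF p_gt_1])
    fix v
    assume "v \<in> fvecs m p"
    then obtain b where b: "b \<in> K" "fmat_vec m p b e = v"
      using surj by (metis (no_types, lifting) image_iff)
    have "fmat_vec m p h v = fmat_vec m p (fmat_mult m p b h) e"
      using K_commute_H[OF b(1) h] by (simp flip: b(2) add: fmat_vec_mult)
    also have "\<dots> = fmat_vec m p (fmat_mult m p a b) e"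
      using K_commute[OF a(1) b(1)] by (simp add: fmat_vec_mult a(2))
    also have "\<dots> = fmat_vec m p a v"
      by (simp add: fmat_vec_mult b(2))
    finally show "fmat_vec m p h v = fmat_vec m p a v" .
  qed (use h H_subset_fmats K_in_fmats[OF a(1)] in blast)+
  then show "h \<in> K" using a(1) by simp
qed

lemma H_eq_K_minus_zero:
  assumes "m > 1" "real p ^ m - 1 \<le> real p * real (card Z)" "card H \<ge> p ^ m - 1"
  shows "H = K - {(\<lambda>_ _. 0)}"
proof (rule card_seteq)
  show "finite (K - {(\<lambda>_ _. 0)})" using finite_K by blast
  show "H \<subseteq> K - {(\<lambda>_ _. 0)}"
    using H_subset_K[OF assms(1,2)] zero_notin_H by blast
  show "card (K - {(\<lambda>_ _. 0)}) \<le> card H"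
    using card_K_minus_zero card_K_le assms(3) by linarith
qed

end

theorem lemma5p16:
  fixes p m :: nat and H :: "(nat \<Rightarrow> nat \<Rightarrow> int) set"
  assumes "prime p" and "odd p" and "m > 1"
    and "subgroup H (GL m p)"
    and "coprime (card H) p"
    and "\<forall>v \<in> fvecs m p - {(\<lambda>_. 0)}. \<forall>w \<in> fvecs m p - {(\<lambda>_. 0)}.
           \<exists>h \<in> H. fmat_vec m p h v = w"
    and "card H \<ge> p ^ m - 1"
    and "real (card (group_center ((GL m p)\<lparr>carrier := H\<rparr>))) \<ge> (real p ^ m - 1) / real p"
  shows "card H = p ^ m - 1 \<and> cyclic_group ((GL m p)\<lparr>carrier := H\<rparr>)"
proof -
  have "p > 1" using assms(1) prime_gt_1_nat by blast
  moreover have "m > 0" using assms(3) by simp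
  ultimately interpret transitive_fmat_group p m H
    using assms(4,6) by (rule transitive_fmat_group.intro)
  have center_bound: "real p ^ m - 1 \<le> real p * real (card Z)"
    using assms(8) p_gt_1 by (simp add: divide_le_eq mult.commute)
  have H: "H = K - {(\<lambda>_ _. 0)}"
    by (rule H_eq_K_minus_zero[OF assms(3) center_bound assms(7)])
  have "card H = card K - 1"
    using arg_cong[OF H, of card] card_K_minus_zero by (rule trans)
  then show ?thesis
    using card_K_le assms(7) cyclic_group_if_units_of_fmat_field[OF p_gt_1 subgroup_H field_K finite_K H]
    by simp
qed

end
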